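(* Let $m=(i,k,\nu)$ with $i\in\{1,\ldots,N\}$, $k\in\{1,\ldots,n\}$, $\nu\in\{1,2\}$, and let $r>0$. Write $\psi_i^{-1}(\leq r)=\{p\in\mathbb{R}^{nN}\mid\psi_i(p)\leq r\}$. (a) The function $h_\nu\circ\psi_i$ is of class $C^1$, and (i) $h_\nu\circ\psi_i$ is bounded by a multiple of $\psi_i$ on $\psi_i^{-1}(\leq r)$; (ii) $\nabla(h_\nu\circ\psi_i)$ is bounded by a multiple of $\psi_i^{1/2}$ on $\psi_i^{-1}(\leq r)$. (b) The Lie derivative $X_m\psi$ is of class $C^2$, and (i) $X_m\psi$ is bounded by a multiple of $\psi_i^{3/2}$ on $\psi_i^{-1}(\leq r)$; (ii) $\nabla(X_m\psi)$ is bounded by a multiple of $\psi_i$ on $\psi_i^{-1}(\leq r)$; (iii) $\mathrm{D}^2(X_m\psi)$ is bounded by a multiple of $\psi_i^{1/2}$ on $\psi_i^{-1}(\leq r)$.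
   Context: $G=(V,E)$ is an undirected graph with $V=\{1,\ldots,N\}$ and nonempty edge set $E$ of two-element subsets (edges $ij$); $d_{ij}\geq0$ for $ij\in E$. For $p=(p_1,\ldots,p_N)\in\mathbb{R}^{nN}$: $\psi_i(p)=\frac14\sum_{j:\,ij\in E}(\|p_j-p_i\|^2-d_{ij}^2)^2$ and $\psi(p)=\frac14\sum_{ij\in E}(\|p_j-p_i\|^2-d_{ij}^2)^2$. For each $i$, $b_{i,1},\ldots,b_{i,n}$ is an orthonormal basis of $\mathbb{R}^n$; $B_{i,k}:\mathbb{R}^{nN}\to\mathbb{R}^{nN}$ is the constant vector field whose $i$-th block in $\mathbb{R}^n$ is $b_{i,k}$ and other blocks are $0$. $X_m(p):=h_\nu(\psi_i(p))B_{i,k}(p)$ for $m=(i,k,\nu)$, and $X_m\psi(p)=\mathrm{D}\psi(p)X_m(p)$ is the Lie derivative. The functions $h_1,h_2:\mathbb{R}\to\mathbb{R}$ satisfy, for $\nu=1,2$: (i) $h_\nu(y)=0$ for $y\leq 0$; (ii) $h_\nu$ is bounded and of class $C^2$ on $(0,\infty)$; (iii) $h_\nu(y)/y$ remains bounded as $y\downarrow 0$; (iv) $h_\nu'(y)$ remains bounded as $y\downarrow0$; (v) $h_\nu''(y)\,y$ remains bounded as $y\downarrow 0$; (vi) there exist $r',c'>0$ with $h_2'(y)h_1(y)-h_1'(y)h_2(y)\leq -c'y$ for all $y\in(0,r']$. Terminology: for a nonnegative function $b$ and a set $W$, a function $f$ is bounded by a multiple of $b$ on $W$ if there is $c>0$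 with $|f(x)|\leq c\,b(x)$ for all $x\in W$; a vector field $X$ if $\|X(x)\|\leq c\,b(x)$; a bilinear-form-valued map $A$ if $|A(x)(v,w)|\leq c\,b(x)\|v\|\|w\|$ for all $x\in W$ and all $v,w$. *)

theory Defs
  imports "HOL-Analysis.Analysis"
begin

definition C1_on :: "'a::real_normed_vector set \<Rightarrow> ('a \<Rightarrow> 'b::real_normed_vector) \<Rightarrow> bool" where
  "C1_on S f \<longleftrightarrow> (\<exists>f'. (\<forall>x\<in>S. (f has_derivative blinfun_apply (f' x)) (at x)) \<and> continuous_on S f')"

definition C2_on :: "'a::real_normed_vector set \<Rightarrow> ('a \<Rightarrow> 'b::real_normed_vector) \<Rightarrow> bool" where
  "C2_on S f \<longleftrightarrow> (\<exists>f' f''. (\<forall>x\<in>S. (f has_derivative blinfun_apply (f' x)) (at x))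
      \<and> (\<forall>x\<in>S. (f' has_derivative blinfun_apply (f'' x)) (at x)) \<and> continuous_on S f'')"

definition D2 :: "('a::real_normed_vector \<Rightarrow> real) \<Rightarrow> 'a \<Rightarrow> 'a \<Rightarrow> 'a \<Rightarrow> real" where
  "D2 f p v w = frechet_derivative (\<lambda>q. frechet_derivative f (at q) v) (at p) w"

text \<open>Configurations p in R^{nN}: p $ i is the position of vertex i in R^n.\<close>
definition psi_i :: "('v::finite set \<Rightarrow> real) \<Rightarrow> 'v set set \<Rightarrow> 'v \<Rightarrow> real^'n^'v \<Rightarrow> real" where
  "psi_i d E i p = (1/4) * (\<Sum>j\<in>{j. {i,j} \<in> E}. ((norm (p$j - p$i))^2 - (d {i,j})^2)^2)"

definition edge_term :: "('v::finite set \<Rightarrow> real) \<Rightarrow> real^'n^'v \<Rightarrow> 'v set \<Rightarrow> real" where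
  "edge_term d p e = (THE t. \<exists>i j. e = {i,j} \<and> i \<noteq> j \<and> t = ((norm (p$j - p$i))^2 - (d e)^2)^2)"

definition psi :: "('v::finite set \<Rightarrow> real) \<Rightarrow> 'v set set \<Rightarrow> real^'n^'v \<Rightarrow> real" where
  "psi d E p = (1/4) * (\<Sum>e\<in>E. edge_term d p e)"

definition Bfield :: "('v::finite \<Rightarrow> 'n \<Rightarrow> real^'n) \<Rightarrow> 'v \<Rightarrow> 'n \<Rightarrow> real^'n^'v" where
  "Bfield b i k = (\<chi> j. if j = i then b i k else 0)"

definition Xfield :: "(nat \<Rightarrow> real \<Rightarrow> real) \<Rightarrow> ('v::finite set \<Rightarrow> real) \<Rightarrow> 'v set set
    \<Rightarrow> ('v \<Rightarrow> 'n \<Rightarrow> real^'n) \<Rightarrow> 'v \<Rightarrow> 'n \<Rightarrow> nat \<Rightarrow> real^'n^'v \<Rightarrow> real^'n^'v" where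
  "Xfield h d E b i k \<nu> p = h \<nu> (psi_i d E i p) *\<^sub>R Bfield b i k"

definition lie :: "('a::real_normed_vector \<Rightarrow> 'a) \<Rightarrow> ('a \<Rightarrow> real) \<Rightarrow> 'a \<Rightarrow> real" where
  "lie X f p = frechet_derivative f (at p) (X p)"

end

theory Submission
  imports Defs
begin

(* Write psi_i = 1/4 sum_j f_j^2 with the edge defects f_j = |p_j - p_i|^2 - d_ij^2.  On the
   sublevel set psi_i <= r every |f_j| <= 2 psi_i^(1/2) and the edges at i are bounded, so
   D psi_i = O(psi_i^(1/2)) and D^2 psi_i = O(1).  Only the edges at i see a motion of vertex i,
   hence X_m psi = h(psi_i) g with g = D psi_i B_{i,k}, and g = O(psi_i^(1/2)), Dg = O(1),
   D^2 g = O(1).  With h(y) = O(y), h' = O(1), h'' = O(1/y) near 0, the chain and product rules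
   give all the bounds.  At points where psi_i = 0 the cutoff h is not differentiable, but there
   the candidate derivatives are dominated by multiples of psi_i resp. psi_i^(1/2), which forces
   differentiability resp. continuity. *)

lemma has_derivative_blinfun_componentwise:
  fixes f :: "'a::real_normed_vector \<Rightarrow> 'b::euclidean_space \<Rightarrow>\<^sub>L 'c::real_normed_vector"
  assumes "\<And>e. e \<in> Basis \<Longrightarrow>
      ((\<lambda>y. blinfun_apply (f y) e) has_derivative (\<lambda>u. blinfun_apply (D u) e)) (at x)"
    and "bounded_linear D"
  shows "(f has_derivative D) (at x)"
proof -
  interpret D: bounded_linear D by fact
  have "((\<lambda>y. (1 / norm (y - x)) *\<^sub>R (f y - (f x + D (y - x)))) \<longlongrightarrow> 0) (at x)"
  proof (rule tendsto_componentwise1)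
    fix e :: 'b assume e: "e \<in> Basis"
    from assms(1)[OF e]
    have "((\<lambda>y. (1 / norm (y - x)) *\<^sub>R (f y e - (f x e + D (y - x) e))) \<longlongrightarrow> 0) (at x)"
      unfolding has_derivative_at2 by simp
    then show "((\<lambda>y. blinfun_apply ((1 / norm (y - x)) *\<^sub>R (f y - (f x + D (y - x)))) e)
        \<longlongrightarrow> blinfun_apply 0 e) (at x)"
      by (simp add: blinfun.bilinear_simps)
  qed
  then show ?thesis unfolding has_derivative_at2 using assms(2) by simp
qed

lemma has_derivative_zero_if_dominated:
  fixes G :: "'a::real_normed_vector \<Rightarrow> 'c::real_normed_vector"
  assumes "(\<phi> has_derivative (\<lambda>_. 0)) (at x)" "\<phi> x = 0" "G x = 0"
    and "eventually (\<lambda>y. norm (G y) \<le> K * \<phi> y) (at x)"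
  shows "(G has_derivative (\<lambda>_. 0)) (at x)"
proof -
  from assms(1) have "((\<lambda>y. norm ((\<phi> y - \<phi> x) - 0) / norm (y - x)) \<longlongrightarrow> 0) (at x)"
    unfolding has_derivative_iff_norm by simp
  then have "((\<lambda>y. norm ((G y - G x) - 0) / norm (y - x)) \<longlongrightarrow> 0) (at x)"
  proof (rule tendsto_0_le[where K="\<bar>K\<bar>"])
    show "\<forall>\<^sub>F y in at x. norm (norm (G y - G x - 0) / norm (y - x))
        \<le> norm (norm (\<phi> y - \<phi> x - 0) / norm (y - x)) * \<bar>K\<bar>"
      using assms(4)
    proof eventually_elim
      case (elim y)
      then have "norm (G y) \<le> \<bar>K\<bar> * \<bar>\<phi> y\<bar>"
        by (metis abs_ge_self abs_mult order_trans)
      then show ?case using assms(2,3) by (simp add: divide_right_mono mult.commute)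
    qed
  qed
  then show ?thesis unfolding has_derivative_iff_norm by simp
qed

lemma isCont_if_dominated_sqrt:
  fixes G :: "'a::real_normed_vector \<Rightarrow> real"
  assumes "isCont \<phi> x" "\<phi> x = 0" "G x = 0"
    and "eventually (\<lambda>y. \<bar>G y\<bar> \<le> K * sqrt (\<phi> y)) (at x)"
  shows "isCont G x"
proof -
  have "((\<lambda>y. sqrt (\<phi> y)) \<longlongrightarrow> 0) (at x)"
    using assms(1,2) tendsto_real_sqrt[of \<phi> "\<phi> x" "at x"] unfolding isCont_def by simp
  then have "(G \<longlongrightarrow> 0) (at x)"
  proof (rule tendsto_0_le[where K="\<bar>K\<bar>"])
    show "\<forall>\<^sub>F y in at x. norm (G y) \<le> norm (sqrt (\<phi> y)) * \<bar>K\<bar>"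
      using assms(4)
    proof eventually_elim
      case (elim y)
      have "K * sqrt (\<phi> y) \<le> \<bar>sqrt (\<phi> y)\<bar> * \<bar>K\<bar>"
        by (metis abs_ge_self abs_mult mult.commute)
      then show ?case using elim by simp
    qed
  qed
  then show ?thesis unfolding isCont_def using assms(3) by simp
qed

lemma has_derivative_zero_along_invariant_direction:
  fixes f :: "'a::real_normed_vector \<Rightarrow> 'b::real_normed_vector"
  assumes "(f has_derivative f') (at p)" and "\<And>t. f (p + t *\<^sub>R b) = f p"
  shows "f' b = 0"
proof -
  have "((\<lambda>t::real. p + t *\<^sub>R b) has_derivative (\<lambda>t. t *\<^sub>R b)) (at 0)"
    by (auto intro!: derivative_eq_intros)
  then have "((f \<circ> (\<lambda>t::real. p + t *\<^sub>R b)) has_derivative f' \<circ> (\<lambda>t. t *\<^sub>R b)) (at 0)"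
    by (rule diff_chain_at) (simp add: assms(1))
  moreover have "((f \<circ> (\<lambda>t::real. p + t *\<^sub>R b)) has_derivative (\<lambda>_. 0)) (at 0)"
    using assms(2) by (simp add: o_def)
  ultimately have "f' \<circ> (\<lambda>t. t *\<^sub>R b) = (\<lambda>_. 0)"
    by (rule has_derivative_unique)
  then show ?thesis by (metis comp_apply scaleR_one)
qed

lemma powr_three_halves:
  assumes "x \<ge> (0::real)"
  shows "x powr (3/2) = x * sqrt x"
proof (cases "x = 0")
  case False
  have "x powr (3/2) = x powr (1 + 1/2)" by simp
  also have "\<dots> = x * sqrt x"
    using assms False by (simp only: powr_add) (simp add: powr_half_sqrt)
  finally show ?thesis .
qed simp

lemma abs_mult_le: "\<bar>a\<bar> \<le> A \<Longrightarrow> \<bar>b\<bar> \<le> B \<Longrightarrow> \<bar>a * b\<bar> \<le> A * (B::real)"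
  by (simp add: abs_mult mult_mono')

lemma abs_add_le: "\<bar>a\<bar> \<le> A \<Longrightarrow> \<bar>b\<bar> \<le> B \<Longrightarrow> \<bar>a + b\<bar> \<le> A + (B::real)"
  by linarith

lemma inner_abs_le: "norm a \<le> A \<Longrightarrow> norm b \<le> B \<Longrightarrow> \<bar>a \<bullet> b\<bar> \<le> A * B"
  by (rule order_trans[OF Cauchy_Schwarz_ineq2]) (simp add: mult_mono')

section \<open>Cutoff functions on the half-line\<close>

lemma bounded_on_Ioc_if_bounded_near_0:
  fixes f :: "real \<Rightarrow> real"
  assumes "continuous_on {0<..} f" "\<delta> > 0" "\<And>y. 0 < y \<Longrightarrow> y < \<delta> \<Longrightarrow> \<bar>f y\<bar> \<le> c"
  obtains C where "\<And>y. 0 < y \<Longrightarrow> y \<le> r \<Longrightarrow> \<bar>f y\<bar> \<le> C"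
proof -
  have "continuous_on {\<delta>..r} f"
    using assms(1) by (rule continuous_on_subset) (use assms(2) in auto)
  then have "bounded (f ` {\<delta>..r})"
    by (intro compact_imp_bounded compact_continuous_image compact_Icc)
  then obtain B where B: "\<And>y. y \<in> {\<delta>..r} \<Longrightarrow> \<bar>f y\<bar> \<le> B"
    unfolding bounded_iff by (metis image_eqI real_norm_def)
  show ?thesis
  proof (rule that[of "max c B"])
    fix y assume "0 < y" "y \<le> r"
    then show "\<bar>f y\<bar> \<le> max c B"
      using assms(3)[of y] B[of y] by (cases "y < \<delta>") auto
  qed
qed

lemma blinfun_apply_real: "blinfun_apply (F :: real \<Rightarrow>\<^sub>L 'b::real_normed_vector) t = t *\<^sub>R F 1"
  using blinfun.scaleR_right[of F t 1] by simp

lemma C2_on_real_open_halfline: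
  fixes f :: "real \<Rightarrow> real"
  assumes "C2_on {0<..} f"
  obtains f' f'' where "\<And>y. 0 < y \<Longrightarrow> (f has_real_derivative f' y) (at y)"
    and "\<And>y. 0 < y \<Longrightarrow> (f' has_real_derivative f'' y) (at y)"
    and "continuous_on {0<..} f''"
proof -
  obtain F' F'' where F': "\<And>y. y \<in> {0<..} \<Longrightarrow> (f has_derivative blinfun_apply (F' y)) (at y)"
    and F'': "\<And>y. y \<in> {0<..} \<Longrightarrow> (F' has_derivative blinfun_apply (F'' y)) (at y)"
    and F''_cont: "continuous_on {0<..} F''"
    using assms unfolding C2_on_def by blast
  define f' where "f' y = blinfun_apply (F' y) 1" for y
  define f'' where "f'' y = blinfun_apply (blinfun_apply (F'' y) 1) 1" for y
  show ?thesis
  proof (rule that[of f' f''])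
    fix y :: real assume y: "0 < y"
    have "blinfun_apply (F' y) t = f' y * t" for t
      using blinfun_apply_real[of "F' y" t] by (simp add: f'_def)
    then have "blinfun_apply (F' y) = (\<lambda>t. f' y * t)"
      by (simp add: fun_eq_iff)
    then show "(f has_real_derivative f' y) (at y)"
      using F'[of y] y unfolding has_field_derivative_def by simp
    have "((\<lambda>x. blinfun_apply (F' x) 1) has_derivative
        (\<lambda>t. blinfun_apply (blinfun_apply (F'' y) t) 1)) (at y)"
      using bounded_linear.has_derivative[OF blinfun.bounded_linear_left F''[of y]] y by simp
    moreover have "blinfun_apply (blinfun_apply (F'' y) t) 1 = f'' y * t" for t
      using blinfun_apply_real[of "F'' y" t] by (simp add: f''_def blinfun.scaleR_left)
    then have "(\<lambda>t. blinfun_apply (blinfun_apply (F'' y) t) 1) = (\<lambda>t. f'' y * t)"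
      by (simp add: fun_eq_iff)
    ultimately show "(f' has_real_derivative f'' y) (at y)"
      unfolding has_field_derivative_def f'_def[abs_def] by simp
  next
    show "continuous_on {0<..} f''"
      unfolding f''_def[abs_def]
      by (intro blinfun.continuous_on[OF blinfun.continuous_on[OF F''_cont]] continuous_on_const)
  qed
qed

lemma cutoff_derivative_bounds:
  fixes f :: "real \<Rightarrow> real"
  assumes "C2_on {0<..} f"
    and "\<exists>c \<delta>. \<delta> > 0 \<and> (\<forall>y. 0 < y \<and> y < \<delta> \<longrightarrow> \<bar>f y / y\<bar> \<le> c)"
    and "\<exists>c \<delta>. \<delta> > 0 \<and> (\<forall>y. 0 < y \<and> y < \<delta> \<longrightarrow> \<bar>deriv f y\<bar> \<le> c)"
    and "\<exists>c \<delta>. \<delta> > 0 \<and> (\<forall>y. 0 < y \<and> y < \<delta> \<longrightarrow> \<bar>deriv (deriv f) y * y\<bar> \<le> c)"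
  obtains f' f'' c where "\<And>y. 0 < y \<Longrightarrow> (f has_real_derivative f' y) (at y)"
    and "\<And>y. 0 < y \<Longrightarrow> (f' has_real_derivative f'' y) (at y)"
    and "continuous_on {0<..} f''" and "c > 0"
    and "\<And>y. 0 < y \<Longrightarrow> y \<le> r \<Longrightarrow> \<bar>f y\<bar> \<le> c * y \<and> \<bar>f' y\<bar> \<le> c \<and> \<bar>f'' y * y\<bar> \<le> c"
proof -
  obtain f' f'' where f': "\<And>y. 0 < y \<Longrightarrow> (f has_real_derivative f' y) (at y)"
    and f'': "\<And>y. 0 < y \<Longrightarrow> (f' has_real_derivative f'' y) (at y)"
    and f''_cont: "continuous_on {0<..} f''"
    using C2_on_real_open_halfline[OF assms(1)] by blast
  have deriv_f: "deriv f y = f' y" if "0 < y" for y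
    using f'[OF that] DERIV_imp_deriv by blast
  have deriv_deriv_f: "deriv (deriv f) y = f'' y" if "0 < y" for y
    using has_field_derivative_transform_within_open[OF f''[OF that], of "{0<..}"] that deriv_f
    by (auto intro: DERIV_imp_deriv)
  have f_cont: "continuous_on {0<..} f" and f'_cont: "continuous_on {0<..} f'"
    using f' f'' by (auto intro!: continuous_at_imp_continuous_on DERIV_isCont)
  have f_div_cont: "continuous_on {0<..} (\<lambda>y. f y / y)"
    using f_cont by (intro continuous_intros) auto
  have f''_mult_cont: "continuous_on {0<..} (\<lambda>y. f'' y * y)"
    using f''_cont by (intro continuous_intros)
  obtain c0 \<delta>0 where \<delta>0: "\<delta>0 > 0" and c0: "\<And>y. 0 < y \<Longrightarrow> y < \<delta>0 \<Longrightarrow> \<bar>f y / y\<bar> \<le> c0"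
    using assms(2) by blast
  obtain C0 where C0: "\<And>y. 0 < y \<Longrightarrow> y \<le> r \<Longrightarrow> \<bar>f y / y\<bar> \<le> C0"
    using bounded_on_Ioc_if_bounded_near_0[where r=r, OF f_div_cont \<delta>0 c0] by blast
  obtain c1 \<delta>1 where \<delta>1: "\<delta>1 > 0" and c1: "\<And>y. 0 < y \<Longrightarrow> y < \<delta>1 \<Longrightarrow> \<bar>f' y\<bar> \<le> c1"
    using assms(3) deriv_f by (metis (full_types))
  obtain C1 where C1: "\<And>y. 0 < y \<Longrightarrow> y \<le> r \<Longrightarrow> \<bar>f' y\<bar> \<le> C1"
    using bounded_on_Ioc_if_bounded_near_0[where r=r, OF f'_cont \<delta>1 c1] by blast
  obtain c2 \<delta>2 where \<delta>2: "\<delta>2 > 0" and c2: "\<And>y. 0 < y \<Longrightarrow> y < \<delta>2 \<Longrightarrow> \<bar>f'' y * y\<bar> \<le> c2"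
    using assms(4) deriv_deriv_f by (metis (full_types))
  obtain C2 where C2: "\<And>y. 0 < y \<Longrightarrow> y \<le> r \<Longrightarrow> \<bar>f'' y * y\<bar> \<le> C2"
    using bounded_on_Ioc_if_bounded_near_0[where r=r, OF f''_mult_cont \<delta>2 c2] by blast
  show ?thesis
  proof (rule that[OF f' f'' f''_cont, of "max 1 (max C0 (max C1 C2))"])
    fix y assume y: "0 < y" "y \<le> r"
    have "\<bar>f y\<bar> = \<bar>f y / y\<bar> * y" using y by (simp add: abs_div)
    also have "\<dots> \<le> max 1 (max C0 (max C1 C2)) * y"
      using C0[OF y] y by (intro mult_right_mono) auto
    finally show "\<bar>f y\<bar> \<le> max 1 (max C0 (max C1 C2)) * y
        \<and> \<bar>f' y\<bar> \<le> max 1 (max C0 (max C1 C2)) \<and> \<bar>f'' y * y\<bar> \<le> max 1 (max C0 (max C1 C2))"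
      using C1[OF y] C2[OF y] by (simp add: le_max_iff_disj)
  qed auto
qed

section \<open>Products \<open>h(\<psi>) g\<close> on a sublevel set of \<open>\<psi>\<close>\<close>

locale cutoff_product =
  fixes \<psi> :: "'a::euclidean_space \<Rightarrow> real" and \<psi>' :: "'a \<Rightarrow> 'a \<Rightarrow> real"
    and \<psi>'' :: "'a \<Rightarrow> 'a \<Rightarrow> 'a \<Rightarrow> real"
    and g :: "'a \<Rightarrow> real" and g' :: "'a \<Rightarrow> 'a \<Rightarrow> real" and g'' :: "'a \<Rightarrow> 'a \<Rightarrow> 'a \<Rightarrow> real"
    and h h' h'' :: "real \<Rightarrow> real" and r c :: real
  assumes psi_deriv: "\<And>x. (\<psi> has_derivative \<psi>' x) (at x)"
    and psi'_deriv: "\<And>x v. ((\<lambda>y. \<psi>' y v) has_derivative (\<lambda>w. \<psi>'' x w v)) (at x)"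
    and psi''_cont: "\<And>w v. continuous_on UNIV (\<lambda>x. \<psi>'' x w v)"
    and psi''_bilinear: "\<And>x. bilinear (\<psi>'' x)"
    and g_deriv: "\<And>x. (g has_derivative g' x) (at x)"
    and g'_deriv: "\<And>x v. ((\<lambda>y. g' y v) has_derivative (\<lambda>w. g'' x w v)) (at x)"
    and g''_cont: "\<And>w v. continuous_on UNIV (\<lambda>x. g'' x w v)"
    and g''_bilinear: "\<And>x. bilinear (g'' x)"
    and psi_nonneg: "\<And>x. \<psi> x \<ge> 0"
    and h_nonpos: "\<And>y. y \<le> 0 \<Longrightarrow> h y = 0"
    and h_deriv: "\<And>y. y > 0 \<Longrightarrow> (h has_real_derivative h' y) (at y)"
    and h'_deriv: "\<And>y. y > 0 \<Longrightarrow> (h' has_real_derivative h'' y) (at y)"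
    and h''_cont: "continuous_on {0<..} h''"
    and r_pos: "r > 0" and c_pos: "c > 0"
    and h_bound: "\<And>y. 0 < y \<Longrightarrow> y \<le> r \<Longrightarrow> \<bar>h y\<bar> \<le> c * y"
    and h'_bound: "\<And>y. 0 < y \<Longrightarrow> y \<le> r \<Longrightarrow> \<bar>h' y\<bar> \<le> c"
    and h''_bound: "\<And>y. 0 < y \<Longrightarrow> y \<le> r \<Longrightarrow> \<bar>h'' y * y\<bar> \<le> c"
    and psi'_bound: "\<And>x v. \<psi> x \<le> r \<Longrightarrow> \<bar>\<psi>' x v\<bar> \<le> c * sqrt (\<psi> x) * norm v"
    and psi''_bound: "\<And>x w v. \<psi> x \<le> r \<Longrightarrow> \<bar>\<psi>'' x w v\<bar> \<le> c * norm w * norm v"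
    and g_bound: "\<And>x. \<psi> x \<le> r \<Longrightarrow> \<bar>g x\<bar> \<le> c * sqrt (\<psi> x)"
    and g'_bound: "\<And>x v. \<psi> x \<le> r \<Longrightarrow> \<bar>g' x v\<bar> \<le> c * norm v"
    and g''_bound: "\<And>x w v. \<psi> x \<le> r \<Longrightarrow> \<bar>g'' x w v\<bar> \<le> c * norm w * norm v"
begin

(* h is differentiable only on (0, oo).  Extended by 0, its derivatives still give those of
   h o psi at zeros of psi, where psi is flat and h o psi = O(psi). *)
definition dh :: "real \<Rightarrow> real" where "dh y = (if y > 0 then h' y else 0)"
definition ddh :: "real \<Rightarrow> real" where "ddh y = (if y > 0 then h'' y else 0)"

definition dH :: "'a \<Rightarrow> 'a \<Rightarrow> real" where "dH p v = dh (\<psi> p) * \<psi>' p v"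
definition dF :: "'a \<Rightarrow> 'a \<Rightarrow> real" where "dF p v = dH p v * g p + h (\<psi> p) * g' p v"
definition ddF :: "'a \<Rightarrow> 'a \<Rightarrow> 'a \<Rightarrow> real" where
  "ddF p w v = ddh (\<psi> p) * \<psi>' p w * \<psi>' p v * g p
     + dh (\<psi> p) * (\<psi>'' p w v * g p + \<psi>' p v * g' p w + \<psi>' p w * g' p v) + h (\<psi> p) * g'' p w v"

lemma dh_deriv: "y > 0 \<Longrightarrow> (dh has_real_derivative h'' y) (at y)"
  by (rule has_field_derivative_transform_within_open[OF h'_deriv, of y "{0<..}"])
    (auto simp: dh_def)

lemma h_deriv_dh: "y > 0 \<Longrightarrow> (h has_real_derivative dh y) (at y)"
  using h_deriv by (simp add: dh_def)

lemma isCont_ddh: "y > 0 \<Longrightarrow> isCont ddh y"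
proof -
  assume y: "y > 0"
  then have "isCont h'' y"
    using h''_cont continuous_on_eq_continuous_at[of "{0<..}" h''] by auto
  moreover have "eventually (\<lambda>x. ddh x = h'' x) (nhds y)"
    using y by (intro eventually_nhds_in_open[of "{0<..}", THEN eventually_mono])
      (auto simp: ddh_def)
  ultimately show ?thesis using isCont_cong by blast
qed

lemma isCont_dh: "y > 0 \<Longrightarrow> isCont dh y"
  using dh_deriv DERIV_isCont by blast

lemma isCont_psi: "isCont \<psi> x"
  using psi_deriv has_derivative_continuous by blast

lemma eventually_sublevel: "\<psi> p < r \<Longrightarrow> eventually (\<lambda>y. \<psi> y \<le> r) (at p)"
  using order_tendstoD(2)[OF isCont_psi[of p, unfolded isCont_def], of r]
  by (auto elim: eventually_mono)

lemma psi_flat_at_zero: "\<psi> x = 0 \<Longrightarrow> (\<psi> has_derivative (\<lambda>_. 0)) (at x)"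
proof -
  assume "\<psi> x = 0"
  then have "\<psi>' x = (\<lambda>_. 0)" using psi'_bound[of x] r_pos by fastforce
  then show ?thesis using psi_deriv[of x] by simp
qed

lemma h_psi_bound: "\<psi> x \<le> r \<Longrightarrow> \<bar>h (\<psi> x)\<bar> \<le> c * \<psi> x"
  using h_bound[of "\<psi> x"] h_nonpos[of 0] psi_nonneg[of x] by (cases "\<psi> x = 0") auto

lemma dh_psi_bound: "\<psi> x \<le> r \<Longrightarrow> \<bar>dh (\<psi> x)\<bar> \<le> c"
  using h'_bound[of "\<psi> x"] c_pos by (auto simp: dh_def)

lemma ddh_psi_bound: "\<psi> x \<le> r \<Longrightarrow> \<bar>ddh (\<psi> x)\<bar> * \<psi> x \<le> c"
  using h''_bound[of "\<psi> x"] c_pos psi_nonneg[of x] by (auto simp: ddh_def abs_mult)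

lemma sqrt_psi_mult_self: "sqrt (\<psi> x) * sqrt (\<psi> x) = \<psi> x"
  using psi_nonneg[of x] by simp

lemma dH_bound: "\<psi> x \<le> r \<Longrightarrow> \<bar>dH x v\<bar> \<le> c^2 * sqrt (\<psi> x) * norm v"
  using abs_mult_le[OF dh_psi_bound psi'_bound, of x x v]
  by (simp add: dH_def power2_eq_square mult.assoc)

lemma dF_bound:
  assumes "\<psi> x \<le> r"
  shows "\<bar>dF x v\<bar> \<le> (c^3 + c^2) * \<psi> x * norm v"
proof -
  have "\<bar>dH x v * g x\<bar> \<le> (c^2 * sqrt (\<psi> x) * norm v) * (c * sqrt (\<psi> x))"
    by (rule abs_mult_le[OF dH_bound[OF assms] g_bound[OF assms]])
  also have "\<dots> = c^3 * (sqrt (\<psi> x) * sqrt (\<psi> x)) * norm v"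
    by (simp add: power2_eq_square power3_eq_cube algebra_simps)
  also have "\<dots> = c^3 * \<psi> x * norm v"
    by (simp only: sqrt_psi_mult_self)
  finally have "\<bar>dH x v * g x\<bar> \<le> c^3 * \<psi> x * norm v" .
  moreover have "\<bar>h (\<psi> x) * g' x v\<bar> \<le> c^2 * \<psi> x * norm v"
    using abs_mult_le[OF h_psi_bound[OF assms] g'_bound[OF assms]]
    by (simp add: power2_eq_square algebra_simps)
  ultimately show ?thesis
    unfolding dF_def using abs_triangle_ineq[of "dH x v * g x" "h (\<psi> x) * g' x v"]
    by (simp add: distrib_right)
qed

lemma ddh_psi'_psi'_bound:
  assumes "\<psi> x \<le> r"
  shows "\<bar>ddh (\<psi> x) * \<psi>' x w * \<psi>' x v\<bar> \<le> c^3 * norm w * norm v"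
proof -
  have "\<bar>\<psi>' x w * \<psi>' x v\<bar> \<le> (c * sqrt (\<psi> x) * norm w) * (c * sqrt (\<psi> x) * norm v)"
    by (rule abs_mult_le[OF psi'_bound[OF assms] psi'_bound[OF assms]])
  also have "\<dots> = (sqrt (\<psi> x) * sqrt (\<psi> x)) * (c^2 * norm w * norm v)"
    by (simp add: power2_eq_square mult_ac)
  finally have "\<bar>\<psi>' x w * \<psi>' x v\<bar> \<le> \<psi> x * (c^2 * norm w * norm v)"
    by (simp only: sqrt_psi_mult_self)
  then have "\<bar>ddh (\<psi> x) * (\<psi>' x w * \<psi>' x v)\<bar> \<le> (\<bar>ddh (\<psi> x)\<bar> * \<psi> x) * (c^2 * norm w * norm v)"
    by (simp add: abs_mult mult_left_mono mult.assoc)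
  also have "\<dots> \<le> c * (c^2 * norm w * norm v)"
    by (rule mult_right_mono[OF ddh_psi_bound[OF assms]]) simp
  finally show ?thesis by (simp add: power2_eq_square power3_eq_cube mult_ac)
qed

lemma ddF_bound:
  assumes "\<psi> x \<le> r"
  shows "\<bar>ddF x w v\<bar> \<le> (c^4 + 3*c^3 + c^2 * sqrt r) * (sqrt (\<psi> x) * norm w * norm v)"
proof -
  define X where "X = sqrt (\<psi> x) * norm w * norm v"
  have "\<bar>ddh (\<psi> x) * \<psi>' x w * \<psi>' x v * g x\<bar> \<le> (c^3 * norm w * norm v) * (c * sqrt (\<psi> x))"
    by (rule abs_mult_le[OF ddh_psi'_psi'_bound[OF assms] g_bound[OF assms]])
  then have T1: "\<bar>ddh (\<psi> x) * \<psi>' x w * \<psi>' x v * g x\<bar> \<le> c^4 * X"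
    by (simp add: X_def power3_eq_cube power4_eq_xxxx mult_ac)
  have "\<bar>\<psi>'' x w v * g x\<bar> \<le> (c * norm w * norm v) * (c * sqrt (\<psi> x))"
      "\<bar>\<psi>' x v * g' x w\<bar> \<le> (c * sqrt (\<psi> x) * norm v) * (c * norm w)"
      "\<bar>\<psi>' x w * g' x v\<bar> \<le> (c * sqrt (\<psi> x) * norm w) * (c * norm v)"
    using abs_mult_le[OF psi''_bound g_bound] abs_mult_le[OF psi'_bound g'_bound] assms by blast+
  then have bracket: "\<bar>\<psi>'' x w v * g x + \<psi>' x v * g' x w + \<psi>' x w * g' x v\<bar> \<le> 3 * c^2 * X"
    unfolding X_def power2_eq_square by (simp add: mult_ac)
  have T2: "\<bar>dh (\<psi> x) * (\<psi>'' x w v * g x + \<psi>' x v * g' x w + \<psi>' x w * g' x v)\<bar> \<le> 3 * c^3 * X"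
    using abs_mult_le[OF dh_psi_bound[OF assms] bracket] by (simp add: power2_eq_square power3_eq_cube mult_ac)
  have "\<bar>h (\<psi> x) * g'' x w v\<bar> \<le> (c * (sqrt (\<psi> x) * sqrt (\<psi> x))) * (c * norm w * norm v)"
    using abs_mult_le[OF h_psi_bound[OF assms] g''_bound[OF assms]] by (simp only: sqrt_psi_mult_self)
  also have "\<dots> \<le> (c * (sqrt r * sqrt (\<psi> x))) * (c * norm w * norm v)"
    using assms c_pos psi_nonneg[of x] by (intro mult_right_mono mult_left_mono) auto
  finally have T3: "\<bar>h (\<psi> x) * g'' x w v\<bar> \<le> c^2 * sqrt r * X"
    by (simp add: X_def power2_eq_square mult_ac)
  show ?thesis
    using T1 T2 T3 unfolding ddF_def X_def[symmetric] by (simp add: distrib_right)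
qed

lemma has_derivative_h_psi: "((\<lambda>p. h (\<psi> p)) has_derivative dH p) (at p)"
proof (cases "\<psi> p > 0")
  case True
  show ?thesis
    by (rule has_derivative_eq_rhs[OF DERIV_compose_FDERIV[OF h_deriv_dh[OF True] psi_deriv]])
      (simp add: dH_def fun_eq_iff mult.commute)
next
  case False
  then have p0: "\<psi> p = 0" using psi_nonneg[of p] by simp
  have "((\<lambda>p. h (\<psi> p)) has_derivative (\<lambda>_. 0)) (at p)"
  proof (rule has_derivative_zero_if_dominated[OF psi_flat_at_zero[OF p0] p0, where K=c])
    show "h (\<psi> p) = 0" using p0 h_nonpos by simp
    show "\<forall>\<^sub>F y in at p. norm (h (\<psi> y)) \<le> c * \<psi> y"
      using eventually_sublevel[of p] p0 r_pos by (auto elim!: eventually_mono dest: h_psi_bound)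
  qed
  moreover have "dH p = (\<lambda>_. 0)" using p0 by (auto simp: dH_def dh_def)
  ultimately show ?thesis by simp
qed

lemma has_derivative_F: "((\<lambda>p. h (\<psi> p) * g p) has_derivative dF p) (at p)"
  by (rule has_derivative_eq_rhs[OF has_derivative_mult[OF has_derivative_h_psi g_deriv]])
    (simp add: dF_def fun_eq_iff algebra_simps)

lemma has_derivative_dF: "((\<lambda>y. dF y v) has_derivative (\<lambda>w. ddF p w v)) (at p)"
proof (cases "\<psi> p > 0")
  case True
  have "(\<lambda>y. dF y v) = (\<lambda>y. dh (\<psi> y) * \<psi>' y v * g y + h (\<psi> y) * g' y v)"
    by (simp add: dF_def dH_def fun_eq_iff)
  moreover note dh_psi = DERIV_compose_FDERIV[OF dh_deriv[OF True] psi_deriv]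
    and h_psi = DERIV_compose_FDERIV[OF h_deriv_dh[OF True] psi_deriv]
  ultimately show ?thesis
    by (simp only:) (rule has_derivative_eq_rhs[OF has_derivative_add[OF
          has_derivative_mult[OF has_derivative_mult[OF dh_psi psi'_deriv] g_deriv]
          has_derivative_mult[OF h_psi g'_deriv]]],
        simp add: ddF_def ddh_def True fun_eq_iff algebra_simps)
next
  case False
  then have p0: "\<psi> p = 0" using psi_nonneg[of p] by simp
  have "((\<lambda>y. dF y v) has_derivative (\<lambda>_. 0)) (at p)"
  proof (rule has_derivative_zero_if_dominated[OF psi_flat_at_zero[OF p0] p0,
        where K="(c^3 + c^2) * norm v"])
    show "dF p v = 0" using p0 h_nonpos by (simp add: dF_def dH_def dh_def)
    show "\<forall>\<^sub>F y in at p. norm (dF y v) \<le> (c^3 + c^2) * norm v * \<psi> y"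
      using eventually_sublevel[of p] p0 r_pos
      by (auto elim!: eventually_mono dest: dF_bound[of _ v] simp: mult_ac)
  qed
  moreover have "(\<lambda>w. ddF p w v) = (\<lambda>_. 0)"
    using p0 h_nonpos by (auto simp: ddF_def dh_def ddh_def)
  ultimately show ?thesis by simp
qed

lemma isCont_dH: "isCont (\<lambda>y. dH y v) p"
proof (cases "\<psi> p > 0")
  case True
  have "isCont (\<lambda>y. \<psi>' y v) p"
    using psi'_deriv has_derivative_continuous by blast
  then show ?thesis
    unfolding dH_def by (intro isCont_mult isCont_o2[OF isCont_psi isCont_dh[OF True]])
next
  case False
  then have p0: "\<psi> p = 0" using psi_nonneg[of p] by simp
  show ?thesis
  proof (rule isCont_if_dominated_sqrt[OF isCont_psi p0, where K="c^2 * norm v"])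
    show "dH p v = 0" using p0 by (simp add: dH_def dh_def)
    show "\<forall>\<^sub>F y in at p. \<bar>dH y v\<bar> \<le> c^2 * norm v * sqrt (\<psi> y)"
      using eventually_sublevel[of p] p0 r_pos
      by (auto elim!: eventually_mono dest: dH_bound[of _ v] simp: mult_ac)
  qed
qed

lemma isCont_ddF: "isCont (\<lambda>y. ddF y w v) p"
proof (cases "\<psi> p > 0")
  case True
  have "isCont (\<lambda>y. \<psi>' y v) p" "isCont (\<lambda>y. \<psi>' y w) p" "isCont (\<lambda>y. g' y v) p"
    "isCont (\<lambda>y. g' y w) p" "isCont g p" "isCont (\<lambda>y. h (\<psi> y)) p"
    using psi'_deriv g'_deriv g_deriv has_derivative_h_psi has_derivative_continuous by blast+
  moreover have "isCont (\<lambda>y. \<psi>'' y w v) p" "isCont (\<lambda>y. g'' y w v) p"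
    using psi''_cont g''_cont continuous_on_eq_continuous_at[of UNIV] by blast+
  ultimately show ?thesis unfolding ddF_def
    by (intro isCont_mult isCont_add isCont_o2[OF isCont_psi isCont_dh[OF True]]
        isCont_o2[OF isCont_psi isCont_ddh[OF True]]) auto
next
  case False
  then have p0: "\<psi> p = 0" using psi_nonneg[of p] by simp
  show ?thesis
  proof (rule isCont_if_dominated_sqrt[OF isCont_psi p0,
        where K="(c^4 + 3*c^3 + c^2 * sqrt r) * norm w * norm v"])
    show "ddF p w v = 0" using p0 h_nonpos by (simp add: ddF_def dh_def ddh_def)
    show "\<forall>\<^sub>F y in at p. \<bar>ddF y w v\<bar> \<le> (c^4 + 3*c^3 + c^2 * sqrt r) * norm w * norm v * sqrt (\<psi> y)"
      using eventually_sublevel[of p] p0 r_pos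
      by (auto elim!: eventually_mono dest: ddF_bound[of _ w v] simp: mult_ac)
  qed
qed

lemma bounded_linear_dH: "bounded_linear (dH p)"
  using has_derivative_h_psi has_derivative_bounded_linear by blast

lemma bounded_linear_dF: "bounded_linear (dF p)"
  using g_deriv has_derivative_bounded_linear unfolding dF_def
  by (blast intro: bounded_linear_add bounded_linear_mult_const bounded_linear_const_mult
      bounded_linear_dH)

lemma bounded_bilinear_ddF: "bounded_bilinear (ddF p)"
proof -
  interpret psi': linear "\<psi>' p"
    using psi_deriv has_derivative_bounded_linear bounded_linear.linear by blast
  interpret g': linear "g' p"
    using g_deriv has_derivative_bounded_linear bounded_linear.linear by blast
  have "\<psi>'' p (x + y) z = \<psi>'' p x z + \<psi>'' p y z" "\<psi>'' p z (x + y) = \<psi>'' p z x + \<psi>'' p z y"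
    "\<psi>'' p (t *\<^sub>R x) z = t * \<psi>'' p x z" "\<psi>'' p z (t *\<^sub>R x) = t * \<psi>'' p z x"
    "g'' p (x + y) z = g'' p x z + g'' p y z" "g'' p z (x + y) = g'' p z x + g'' p z y"
    "g'' p (t *\<^sub>R x) z = t * g'' p x z" "g'' p z (t *\<^sub>R x) = t * g'' p z x" for x y z t
    using psi''_bilinear[of p] g''_bilinear[of p]
    by (simp_all add: bilinear_ladd bilinear_radd bilinear_lmul bilinear_rmul)
  then have "bilinear (ddF p)"
    unfolding bilinear_def linear_iff ddF_def
    by (simp add: psi'.add psi'.scale g'.add g'.scale algebra_simps)
  then show ?thesis using bilinear_conv_bounded_bilinear by blast
qed

definition DF :: "'a \<Rightarrow> 'a \<Rightarrow>\<^sub>L real" where "DF p = Blinfun (dF p)"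
definition DDF :: "'a \<Rightarrow> 'a \<Rightarrow>\<^sub>L 'a \<Rightarrow>\<^sub>L real" where "DDF p = Blinfun (\<lambda>w. Blinfun (ddF p w))"

lemma blinfun_apply_DF: "blinfun_apply (DF p) = dF p"
  unfolding DF_def using bounded_linear_dF bounded_linear_Blinfun_apply by blast

lemma blinfun_apply_DDF: "blinfun_apply (blinfun_apply (DDF p) w) v = ddF p w v"
proof -
  have ddF_right: "bounded_linear (ddF p w)" for w
    using bounded_bilinear_ddF bounded_bilinear.bounded_linear_right by blast
  have "bounded_bilinear (\<lambda>w. blinfun_apply (Blinfun (ddF p w)))"
    using bounded_bilinear_ddF bounded_linear_Blinfun_apply[OF ddF_right] by simp
  then have ddF_left: "bounded_linear (\<lambda>w. Blinfun (ddF p w))"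
    by (rule transfer_bounded_bilinear_bounded_linearI[THEN iffD1, rotated]) simp
  show ?thesis
    unfolding DDF_def using bounded_linear_Blinfun_apply[OF ddF_left] bounded_linear_Blinfun_apply[OF ddF_right]
    by simp
qed

lemma C1_on_h_psi: "C1_on UNIV (\<lambda>p. h (\<psi> p))"
  unfolding C1_on_def
proof (intro exI[of _ "\<lambda>p. Blinfun (dH p)"] conjI ballI)
  show "((\<lambda>p. h (\<psi> p)) has_derivative blinfun_apply (Blinfun (dH p))) (at p)" for p
    using has_derivative_h_psi bounded_linear_Blinfun_apply[OF bounded_linear_dH] by simp
  show "continuous_on UNIV (\<lambda>p. Blinfun (dH p))"
  proof (rule continuous_on_blinfun_componentwise)
    fix e :: 'a
    show "continuous_on UNIV (\<lambda>p. blinfun_apply (Blinfun (dH p)) e)"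
      using isCont_dH bounded_linear_Blinfun_apply[OF bounded_linear_dH]
      by (simp add: continuous_at_imp_continuous_on)
  qed
qed

lemma C2_on_F: "C2_on UNIV (\<lambda>p. h (\<psi> p) * g p)"
  unfolding C2_on_def
proof (intro exI[of _ DF] exI[of _ DDF] conjI ballI)
  show "((\<lambda>p. h (\<psi> p) * g p) has_derivative blinfun_apply (DF p)) (at p)" for p
    unfolding blinfun_apply_DF by (rule has_derivative_F)
  show "(DF has_derivative blinfun_apply (DDF p)) (at p)" for p
    using has_derivative_dF
    by (intro has_derivative_blinfun_componentwise blinfun.bounded_linear_right)
      (simp add: blinfun_apply_DF blinfun_apply_DDF)
  show "continuous_on UNIV DDF"
  proof (intro continuous_on_blinfun_componentwise)
    fix w v :: 'a
    show "continuous_on UNIV (\<lambda>p. blinfun_apply (blinfun_apply (DDF p) w) v)"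
      using isCont_ddF by (simp add: blinfun_apply_DDF continuous_at_imp_continuous_on)
  qed
qed

lemma frechet_derivative_h_psi_bound:
  "\<psi> p \<le> r \<Longrightarrow> \<bar>frechet_derivative (\<lambda>q. h (\<psi> q)) (at p) v\<bar> \<le> c^2 * sqrt (\<psi> p) * norm v"
  using frechet_derivative_at[OF has_derivative_h_psi] dH_bound by simp

lemma F_bound:
  assumes "\<psi> p \<le> r"
  shows "\<bar>h (\<psi> p) * g p\<bar> \<le> c^2 * \<psi> p powr (3/2)"
proof -
  have "\<bar>h (\<psi> p) * g p\<bar> \<le> (c * \<psi> p) * (c * sqrt (\<psi> p))"
    by (rule abs_mult_le[OF h_psi_bound[OF assms] g_bound[OF assms]])
  then show ?thesis
    using psi_nonneg[of p] by (simp add: powr_three_halves power2_eq_square mult_ac)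
qed

lemma frechet_derivative_F_bound:
  "\<psi> p \<le> r \<Longrightarrow> \<bar>frechet_derivative (\<lambda>p. h (\<psi> p) * g p) (at p) v\<bar> \<le> (c^3 + c^2) * \<psi> p * norm v"
  using frechet_derivative_at[OF has_derivative_F] dF_bound by simp

lemma D2_F_bound:
  assumes "\<psi> p \<le> r"
  shows "\<bar>D2 (\<lambda>p. h (\<psi> p) * g p) p v w\<bar>
    \<le> (c^4 + 3*c^3 + c^2 * sqrt r) * sqrt (\<psi> p) * norm v * norm w"
proof -
  have "(\<lambda>q. frechet_derivative (\<lambda>p. h (\<psi> p) * g p) (at q) v) = (\<lambda>q. dF q v)"
    using frechet_derivative_at[OF has_derivative_F] by metis
  then have "D2 (\<lambda>p. h (\<psi> p) * g p) p v w = ddF p w v"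
    unfolding D2_def using frechet_derivative_at[OF has_derivative_dF[of v p]] by metis
  then show ?thesis using ddF_bound[OF assms, of w v] by (simp add: mult_ac)
qed

lemma cutoff_product_bounds:
  "C1_on UNIV (\<lambda>p. h (\<psi> p))
   \<and> (\<exists>c>0. \<forall>p. \<psi> p \<le> r \<longrightarrow> \<bar>h (\<psi> p)\<bar> \<le> c * \<psi> p)
   \<and> (\<exists>c>0. \<forall>p v. \<psi> p \<le> r \<longrightarrow>
         \<bar>frechet_derivative (\<lambda>q. h (\<psi> q)) (at p) v\<bar> \<le> c * sqrt (\<psi> p) * norm v)
   \<and> C2_on UNIV (\<lambda>p. h (\<psi> p) * g p)
   \<and> (\<exists>c>0. \<forall>p. \<psi> p \<le> r \<longrightarrow> \<bar>h (\<psi> p) * g p\<bar> \<le> c * \<psi> p powr (3/2))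
   \<and> (\<exists>c>0. \<forall>p v. \<psi> p \<le> r \<longrightarrow>
         \<bar>frechet_derivative (\<lambda>p. h (\<psi> p) * g p) (at p) v\<bar> \<le> c * \<psi> p * norm v)
   \<and> (\<exists>c>0. \<forall>p v w. \<psi> p \<le> r \<longrightarrow>
         \<bar>D2 (\<lambda>p. h (\<psi> p) * g p) p v w\<bar> \<le> c * sqrt (\<psi> p) * norm v * norm w)"
proof -
  have "c^2 > 0" "c^3 + c^2 > 0" "c^4 + 3*c^3 + c^2 * sqrt r > 0"
    using c_pos r_pos by (simp_all add: add_pos_pos add_pos_nonneg)
  then show ?thesis
    using c_pos C1_on_h_psi h_psi_bound frechet_derivative_h_psi_bound C2_on_F F_bound
      frechet_derivative_F_bound D2_F_bound
    by blast
qed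

end

section \<open>The local stress \<open>\<psi>\<^sub>i\<close> and its derivatives\<close>

definition edge_vec :: "'v::finite \<Rightarrow> 'v \<Rightarrow> real^'n^'v \<Rightarrow> real^'n" where
  "edge_vec i j p = p$j - p$i"

definition edge_defect :: "('v::finite set \<Rightarrow> real) \<Rightarrow> 'v \<Rightarrow> 'v \<Rightarrow> real^'n^'v \<Rightarrow> real" where
  "edge_defect d i j p = edge_vec i j p \<bullet> edge_vec i j p - (d {i,j})^2"

definition nbrs :: "'v set set \<Rightarrow> 'v \<Rightarrow> 'v set" where
  "nbrs E i = {j. {i,j} \<in> E}"

definition psi_i' :: "('v::finite set \<Rightarrow> real) \<Rightarrow> 'v set set \<Rightarrow> 'v \<Rightarrow> real^'n^'v \<Rightarrow> real^'n^'v \<Rightarrow> real"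
  where "psi_i' d E i p v = (\<Sum>j\<in>nbrs E i. edge_defect d i j p * (edge_vec i j p \<bullet> edge_vec i j v))"

definition psi_i'' :: "('v::finite set \<Rightarrow> real) \<Rightarrow> 'v set set \<Rightarrow> 'v \<Rightarrow> real^'n^'v \<Rightarrow> real^'n^'v
    \<Rightarrow> real^'n^'v \<Rightarrow> real"
  where "psi_i'' d E i p w v = (\<Sum>j\<in>nbrs E i. 2 * (edge_vec i j p \<bullet> edge_vec i j w) * (edge_vec i j p \<bullet> edge_vec i j v)
      + edge_defect d i j p * (edge_vec i j w \<bullet> edge_vec i j v))"

definition psi_i_along :: "('v::finite set \<Rightarrow> real) \<Rightarrow> 'v set set \<Rightarrow> 'v \<Rightarrow> real^'n \<Rightarrow> real^'n^'v \<Rightarrow> real"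
  where "psi_i_along d E i u p = - (\<Sum>j\<in>nbrs E i. edge_defect d i j p * (edge_vec i j p \<bullet> u))"

definition psi_i_along' :: "('v::finite set \<Rightarrow> real) \<Rightarrow> 'v set set \<Rightarrow> 'v \<Rightarrow> real^'n \<Rightarrow> real^'n^'v
    \<Rightarrow> real^'n^'v \<Rightarrow> real"
  where "psi_i_along' d E i u p v = - (\<Sum>j\<in>nbrs E i. 2 * (edge_vec i j p \<bullet> edge_vec i j v) * (edge_vec i j p \<bullet> u)
      + edge_defect d i j p * (edge_vec i j v \<bullet> u))"

definition psi_i_along'' :: "('v::finite set \<Rightarrow> real) \<Rightarrow> 'v set set \<Rightarrow> 'v \<Rightarrow> real^'n \<Rightarrow> real^'n^'v
    \<Rightarrow> real^'n^'v \<Rightarrow> real^'n^'v \<Rightarrow> real"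
  where "psi_i_along'' d E i u p w v = - (\<Sum>j\<in>nbrs E i. 2 * (edge_vec i j w \<bullet> edge_vec i j v) * (edge_vec i j p \<bullet> u)
      + 2 * (edge_vec i j p \<bullet> edge_vec i j v) * (edge_vec i j w \<bullet> u)
      + 2 * (edge_vec i j p \<bullet> edge_vec i j w) * (edge_vec i j v \<bullet> u))"

lemma psi_i_eq_sum_defect: "psi_i d E i = (\<lambda>p. 1/4 * (\<Sum>j\<in>nbrs E i. (edge_defect d i j p)^2))"
  by (simp add: fun_eq_iff psi_i_def edge_defect_def edge_vec_def nbrs_def power2_norm_eq_inner)

lemma bounded_linear_edge_vec: "bounded_linear (edge_vec i j)"
  unfolding edge_vec_def[abs_def] by (intro bounded_linear_sub bounded_linear_vec_nth)

lemmas has_derivative_edge_vec = bounded_linear_imp_has_derivative[OF bounded_linear_edge_vec]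

lemma edge_vec_add: "edge_vec i j (x + y) = edge_vec i j x + edge_vec i j y"
  and edge_vec_scaleR: "edge_vec i j (t *\<^sub>R x) = t *\<^sub>R edge_vec i j x"
  by (simp_all add: edge_vec_def algebra_simps)

lemma has_derivative_edge_defect:
  "(edge_defect d i j has_derivative (\<lambda>v. 2 * (edge_vec i j p \<bullet> edge_vec i j v))) (at p)"
  unfolding edge_defect_def[abs_def]
  by (rule has_derivative_eq_rhs[OF has_derivative_diff[OF
        has_derivative_inner[OF has_derivative_edge_vec has_derivative_edge_vec] has_derivative_const]])
    (simp add: fun_eq_iff inner_commute)

lemma has_derivative_psi_i: "(psi_i d E i has_derivative psi_i' d E i p) (at p)"
  unfolding psi_i_eq_sum_defect
  by (rule has_derivative_eq_rhs[OF has_derivative_mult_right[OF has_derivative_sum[OF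
          has_derivative_power[OF has_derivative_edge_defect]]]])
    (simp add: fun_eq_iff psi_i'_def sum_distrib_left mult_ac)

lemma has_derivative_psi_i':
  "((\<lambda>y. psi_i' d E i y v) has_derivative (\<lambda>w. psi_i'' d E i p w v)) (at p)"
  unfolding psi_i'_def
  by (rule has_derivative_eq_rhs[OF has_derivative_sum[OF has_derivative_mult[OF
          has_derivative_edge_defect has_derivative_inner[OF has_derivative_edge_vec has_derivative_const]]]])
    (simp add: fun_eq_iff psi_i''_def algebra_simps inner_commute)

lemma has_derivative_psi_i_along: "(psi_i_along d E i u has_derivative psi_i_along' d E i u p) (at p)"
  unfolding psi_i_along_def[abs_def]
  by (rule has_derivative_eq_rhs[OF has_derivative_minus[OF has_derivative_sum[OF has_derivative_mult[OF
          has_derivative_edge_defect has_derivative_inner[OF has_derivative_edge_vec has_derivative_const]]]]])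
    (simp add: fun_eq_iff psi_i_along'_def algebra_simps inner_commute)

lemma has_derivative_psi_i_along':
  "((\<lambda>y. psi_i_along' d E i u y v) has_derivative (\<lambda>w. psi_i_along'' d E i u p w v)) (at p)"
proof -
  note inner_u = has_derivative_inner[OF has_derivative_edge_vec has_derivative_const]
  show ?thesis
    unfolding psi_i_along'_def
    by (rule has_derivative_eq_rhs[OF has_derivative_minus[OF has_derivative_sum[OF has_derivative_add[OF
            has_derivative_mult[OF has_derivative_mult_right[OF inner_u] inner_u]
            has_derivative_mult[OF has_derivative_edge_defect has_derivative_const]]]]])
      (simp add: fun_eq_iff psi_i_along''_def algebra_simps inner_commute sum.distrib)
qed

lemma continuous_on_psi_i'': "continuous_on UNIV (\<lambda>x. psi_i'' d E i x w v)"
  and continuous_on_psi_i_along'': "continuous_on UNIV (\<lambda>x. psi_i_along'' d E i u x w v)"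
  unfolding psi_i''_def psi_i_along''_def edge_defect_def
  by (intro continuous_intros linear_continuous_on[OF bounded_linear_edge_vec])+

lemma bilinear_psi_i'': "bilinear (psi_i'' d E i p)"
  and bilinear_psi_i_along'': "bilinear (psi_i_along'' d E i u p)"
  unfolding bilinear_def linear_iff psi_i''_def psi_i_along''_def
  by (simp_all add: edge_vec_add edge_vec_scaleR inner_add_left inner_add_right sum.distrib
      sum_distrib_left algebra_simps)

lemma psi_i_nonneg: "psi_i d E i p \<ge> 0"
  unfolding psi_i_eq_sum_defect by (simp add: sum_nonneg)

lemma abs_edge_defect_le:
  assumes "j \<in> nbrs E i"
  shows "\<bar>edge_defect d i j p\<bar> \<le> 2 * sqrt (psi_i d E i p)"
proof -
  have "(edge_defect d i j p)^2 \<le> (\<Sum>j\<in>nbrs E i. (edge_defect d i j p)^2)"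
    by (rule member_le_sum[OF assms]) auto
  then have "\<bar>edge_defect d i j p\<bar> \<le> sqrt (4 * psi_i d E i p)"
    by (intro real_le_rsqrt) (simp add: psi_i_eq_sum_defect)
  then show ?thesis by (simp add: real_sqrt_mult)
qed

lemma norm_edge_vec_le: "norm (edge_vec i j v) \<le> 2 * norm v"
  using norm_triangle_ineq4[of "v$j" "v$i"] Finite_Cartesian_Product.norm_nth_le[of v j]
    Finite_Cartesian_Product.norm_nth_le[of v i]
  by (simp add: edge_vec_def)

definition sublevel_edge_bound :: "('v::finite set \<Rightarrow> real) \<Rightarrow> 'v set set \<Rightarrow> 'v \<Rightarrow> real \<Rightarrow> real" where
  "sublevel_edge_bound d E i r = sqrt (2 * sqrt r + (\<Sum>j\<in>nbrs E i. (d {i,j})^2))"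

lemma norm_edge_vec_sublevel:
  assumes "psi_i d E i p \<le> r" "j \<in> nbrs E i"
  shows "norm (edge_vec i j p) \<le> sublevel_edge_bound d E i r"
  unfolding sublevel_edge_bound_def
proof (rule real_le_rsqrt)
  have "edge_defect d i j p \<le> 2 * sqrt r"
    using abs_edge_defect_le[OF assms(2), of d p] assms(1) by (smt (verit) real_sqrt_le_iff)
  moreover have "(d {i,j})^2 \<le> (\<Sum>j\<in>nbrs E i. (d {i,j})^2)"
    by (rule member_le_sum[OF assms(2)]) auto
  ultimately show "(norm (edge_vec i j p))^2 \<le> 2 * sqrt r + (\<Sum>j\<in>nbrs E i. (d {i,j})^2)"
    by (simp add: edge_defect_def power2_norm_eq_inner)
qed

definition sublevel_const :: "('v::finite set \<Rightarrow> real) \<Rightarrow> 'v set set \<Rightarrow> 'v \<Rightarrow> real \<Rightarrow> real" where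
  "sublevel_const d E i r = real (card (nbrs E i))
     * (8 * (sublevel_edge_bound d E i r)^2 + 8 * sqrt r + 24 * sublevel_edge_bound d E i r) + 1"

context
  fixes d :: "'v::finite set \<Rightarrow> real" and E :: "'v set set" and i :: 'v and r :: real
    and u :: "real^'n::finite" and c :: real and p :: "real^'n^'v"
  assumes r_pos: "r > 0" and u_le_1: "norm u \<le> 1" and c_ge: "sublevel_const d E i r \<le> c"
    and sublevel: "psi_i d E i p \<le> r"
begin

private abbreviation (input) "U \<equiv> sublevel_edge_bound d E i r"
(* K0 dominates the coefficient in each single-edge estimate below. *)
private abbreviation (input) "K0 \<equiv> 8 * U^2 + 8 * sqrt r + 24 * U"
private abbreviation (input) "s \<equiv> sqrt (psi_i d E i p)"

private lemma nonneg: "U \<ge> 0" "sqrt r \<ge> 0" "s \<ge> 0"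
  using r_pos psi_i_nonneg[of d E i p] by (simp_all add: sublevel_edge_bound_def sum_nonneg)

private lemma edge_facts:
  assumes "j \<in> nbrs E i"
  shows "\<bar>edge_defect d i j p\<bar> \<le> 2 * sqrt r" "norm (edge_vec i j p) \<le> U"
  using abs_edge_defect_le[OF assms, of d p] real_sqrt_le_mono[OF sublevel]
    norm_edge_vec_sublevel[OF sublevel assms]
  by linarith+

private lemma sum_abs_le_c:
  assumes "\<And>j. j \<in> nbrs E i \<Longrightarrow> \<bar>f j\<bar> \<le> K0 * X" "X \<ge> 0"
  shows "\<bar>\<Sum>j\<in>nbrs E i. f j\<bar> \<le> c * X"
proof -
  have "\<bar>\<Sum>j\<in>nbrs E i. f j\<bar> \<le> (\<Sum>j\<in>nbrs E i. K0 * X)"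
    using assms(1) by (intro order_trans[OF sum_abs sum_mono])
  also have "\<dots> \<le> sublevel_const d E i r * X"
    using assms(2) by (simp add: sublevel_const_def algebra_simps)
  also have "\<dots> \<le> c * X"
    using assms(2) c_ge by (rule mult_right_mono[rotated])
  finally show ?thesis .
qed

lemma psi_i'_bound: "\<bar>psi_i' d E i p v\<bar> \<le> c * sqrt (psi_i d E i p) * norm v"
proof -
  have "\<bar>edge_defect d i j p * (edge_vec i j p \<bullet> edge_vec i j v)\<bar> \<le> K0 * (s * norm v)"
    if j: "j \<in> nbrs E i" for j
  proof -
    have "\<bar>edge_defect d i j p * (edge_vec i j p \<bullet> edge_vec i j v)\<bar> \<le> (2 * s) * (U * (2 * norm v))"
      by (intro abs_mult_le abs_edge_defect_le inner_abs_le norm_edge_vec_sublevel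
          norm_edge_vec_le sublevel j)
    also have "\<dots> = (4 * U) * (s * norm v)"
      by (simp add: mult_ac)
    also have "\<dots> \<le> K0 * (s * norm v)"
      using nonneg zero_le_power2[of U] by (intro mult_right_mono mult_nonneg_nonneg) auto
    finally show ?thesis .
  qed
  then show ?thesis
    unfolding psi_i'_def mult.assoc
    by (rule sum_abs_le_c) (auto intro!: mult_nonneg_nonneg simp: psi_i_nonneg)
qed

lemma psi_i''_bound: "\<bar>psi_i'' d E i p w v\<bar> \<le> c * norm w * norm v"
proof -
  have "\<bar>2 * (edge_vec i j p \<bullet> edge_vec i j w) * (edge_vec i j p \<bullet> edge_vec i j v)
      + edge_defect d i j p * (edge_vec i j w \<bullet> edge_vec i j v)\<bar> \<le> K0 * (norm w * norm v)"
    if j: "j \<in> nbrs E i" for j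
  proof -
    have "\<bar>(edge_vec i j p \<bullet> edge_vec i j w) * (edge_vec i j p \<bullet> edge_vec i j v)\<bar>
        \<le> (U * (2 * norm w)) * (U * (2 * norm v))"
      "\<bar>edge_defect d i j p * (edge_vec i j w \<bullet> edge_vec i j v)\<bar>
        \<le> (2 * sqrt r) * ((2 * norm w) * (2 * norm v))"
      by (intro abs_mult_le inner_abs_le edge_facts norm_edge_vec_le j)+
    then have "\<bar>2 * (edge_vec i j p \<bullet> edge_vec i j w) * (edge_vec i j p \<bullet> edge_vec i j v)
        + edge_defect d i j p * (edge_vec i j w \<bullet> edge_vec i j v)\<bar>
        \<le> 2 * ((U * (2 * norm w)) * (U * (2 * norm v))) + (2 * sqrt r) * ((2 * norm w) * (2 * norm v))"
      by (intro abs_add_le) (simp_all add: abs_mult mult_ac)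
    also have "\<dots> = (8 * U^2 + 8 * sqrt r) * (norm w * norm v)"
      by (simp add: power2_eq_square algebra_simps)
    also have "\<dots> \<le> K0 * (norm w * norm v)"
      using nonneg by (intro mult_right_mono) auto
    finally show ?thesis .
  qed
  then show ?thesis
    unfolding psi_i''_def mult.assoc by (rule sum_abs_le_c) auto
qed

lemma psi_i_along_bound: "\<bar>psi_i_along d E i u p\<bar> \<le> c * sqrt (psi_i d E i p)"
proof -
  have "\<bar>edge_defect d i j p * (edge_vec i j p \<bullet> u)\<bar> \<le> K0 * s" if j: "j \<in> nbrs E i" for j
  proof -
    have "\<bar>edge_defect d i j p * (edge_vec i j p \<bullet> u)\<bar> \<le> (2 * s) * (U * 1)"
      by (intro abs_mult_le abs_edge_defect_le inner_abs_le edge_facts u_le_1 j)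
    also have "\<dots> = (2 * U) * s"
      by simp
    also have "\<dots> \<le> K0 * s"
      using nonneg zero_le_power2[of U] by (intro mult_right_mono) auto
    finally show ?thesis .
  qed
  then show ?thesis
    unfolding psi_i_along_def abs_minus_cancel
    by (rule sum_abs_le_c) (auto simp: psi_i_nonneg)
qed

lemma psi_i_along'_bound: "\<bar>psi_i_along' d E i u p v\<bar> \<le> c * norm v"
proof -
  have "\<bar>2 * (edge_vec i j p \<bullet> edge_vec i j v) * (edge_vec i j p \<bullet> u)
      + edge_defect d i j p * (edge_vec i j v \<bullet> u)\<bar> \<le> K0 * norm v"
    if j: "j \<in> nbrs E i" for j
  proof -
    have "\<bar>(edge_vec i j p \<bullet> edge_vec i j v) * (edge_vec i j p \<bullet> u)\<bar> \<le> (U * (2 * norm v)) * (U * 1)"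
      "\<bar>edge_defect d i j p * (edge_vec i j v \<bullet> u)\<bar> \<le> (2 * sqrt r) * ((2 * norm v) * 1)"
      by (intro abs_mult_le inner_abs_le edge_facts norm_edge_vec_le u_le_1 j)+
    then have "\<bar>2 * (edge_vec i j p \<bullet> edge_vec i j v) * (edge_vec i j p \<bullet> u)
        + edge_defect d i j p * (edge_vec i j v \<bullet> u)\<bar>
        \<le> 2 * ((U * (2 * norm v)) * (U * 1)) + (2 * sqrt r) * ((2 * norm v) * 1)"
      by (intro abs_add_le) (simp_all add: abs_mult mult_ac)
    also have "\<dots> = (4 * U^2 + 4 * sqrt r) * norm v"
      by (simp add: power2_eq_square algebra_simps)
    also have "\<dots> \<le> K0 * norm v"
      using nonneg zero_le_power2[of U] by (intro mult_right_mono) auto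
    finally show ?thesis .
  qed
  then show ?thesis
    unfolding psi_i_along'_def abs_minus_cancel by (rule sum_abs_le_c) auto
qed

lemma psi_i_along''_bound: "\<bar>psi_i_along'' d E i u p w v\<bar> \<le> c * norm w * norm v"
proof -
  have "\<bar>2 * (edge_vec i j w \<bullet> edge_vec i j v) * (edge_vec i j p \<bullet> u)
      + 2 * (edge_vec i j p \<bullet> edge_vec i j v) * (edge_vec i j w \<bullet> u)
      + 2 * (edge_vec i j p \<bullet> edge_vec i j w) * (edge_vec i j v \<bullet> u)\<bar> \<le> K0 * (norm w * norm v)"
    if j: "j \<in> nbrs E i" for j
  proof -
    have "\<bar>(edge_vec i j w \<bullet> edge_vec i j v) * (edge_vec i j p \<bullet> u)\<bar> \<le> ((2 * norm w) * (2 * norm v)) * (U * 1)"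
      "\<bar>(edge_vec i j p \<bullet> edge_vec i j v) * (edge_vec i j w \<bullet> u)\<bar> \<le> (U * (2 * norm v)) * ((2 * norm w) * 1)"
      "\<bar>(edge_vec i j p \<bullet> edge_vec i j w) * (edge_vec i j v \<bullet> u)\<bar> \<le> (U * (2 * norm w)) * ((2 * norm v) * 1)"
      by (intro abs_mult_le inner_abs_le edge_facts norm_edge_vec_le u_le_1 j)+
    then have "\<bar>2 * (edge_vec i j w \<bullet> edge_vec i j v) * (edge_vec i j p \<bullet> u)
        + 2 * (edge_vec i j p \<bullet> edge_vec i j v) * (edge_vec i j w \<bullet> u)
        + 2 * (edge_vec i j p \<bullet> edge_vec i j w) * (edge_vec i j v \<bullet> u)\<bar>
        \<le> 2 * (((2 * norm w) * (2 * norm v)) * (U * 1)) + 2 * ((U * (2 * norm v)) * ((2 * norm w) * 1))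
          + 2 * ((U * (2 * norm w)) * ((2 * norm v) * 1))"
      by (intro abs_add_le) (simp_all add: abs_mult mult_ac)
    also have "\<dots> = (24 * U) * (norm w * norm v)"
      by (simp add: algebra_simps)
    also have "\<dots> \<le> K0 * (norm w * norm v)"
      using nonneg zero_le_power2[of U] by (intro mult_right_mono) auto
    finally show ?thesis .
  qed
  then show ?thesis
    unfolding psi_i_along''_def abs_minus_cancel mult.assoc by (rule sum_abs_le_c) auto
qed

end

section \<open>The Lie derivative \<open>X\<^sub>m \<psi>\<close>\<close>

lemma edge_term_doubleton:
  assumes "a \<noteq> c"
  shows "edge_term d p {a,c} = ((norm (p$c - p$a))^2 - (d {a,c})^2)^2"
  unfolding edge_term_def
proof (rule the_equality)
  show "\<exists>i j. {a, c} = {i, j} \<and> i \<noteq> j \<and>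
      ((norm (p$c - p$a))^2 - (d {a,c})^2)^2 = ((norm (p$j - p$i))^2 - (d {a,c})^2)^2"
    using assms by blast
  fix t assume "\<exists>i j. {a, c} = {i, j} \<and> i \<noteq> j \<and> t = ((norm (p$j - p$i))^2 - (d {a,c})^2)^2"
  then obtain i j where "{a, c} = {i, j}" "t = ((norm (p$j - p$i))^2 - (d {a,c})^2)^2"
    by blast
  then show "t = ((norm (p$c - p$a))^2 - (d {a,c})^2)^2"
    by (auto simp: doubleton_eq_iff norm_minus_commute)
qed

definition psi_rest :: "('v::finite set \<Rightarrow> real) \<Rightarrow> 'v set set \<Rightarrow> 'v \<Rightarrow> real^'n^'v \<Rightarrow> real" where
  "psi_rest d E i p = 1/4 * (\<Sum>e\<in>E - {e. i \<in> e}. edge_term d p e)"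

lemma psi_eq_psi_i_plus_psi_rest:
  fixes E :: "'v::finite set set"
  assumes edges: "\<forall>e\<in>E. card e = 2"
  shows "psi d E p = psi_i d E i p + psi_rest d E i p"
proof -
  have incident: "E \<inter> {e. i \<in> e} = (\<lambda>j. {i,j}) ` nbrs E i"
  proof
    show "E \<inter> {e. i \<in> e} \<subseteq> (\<lambda>j. {i,j}) ` nbrs E i"
    proof
      fix e assume e: "e \<in> E \<inter> {e. i \<in> e}"
      then have "card e = 2"
        using edges by blast
      then obtain a c where "e = {a,c}"
        unfolding card_2_iff by blast
      moreover have "i = a \<or> i = c"
        using e \<open>e = {a,c}\<close> by auto
      ultimately obtain j where "e = {i,j}"
        by (metis insert_commute)
      with e show "e \<in> (\<lambda>j. {i,j}) ` nbrs E i"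
        by (auto simp: nbrs_def)
    qed
  qed (auto simp: nbrs_def)
  have "inj_on (\<lambda>j. {i,j}) (nbrs E i)"
    by (auto simp: inj_on_def doubleton_eq_iff)
  then have "(\<Sum>e\<in>E \<inter> {e. i \<in> e}. edge_term d p e) = (\<Sum>j\<in>nbrs E i. edge_term d p {i,j})"
    unfolding incident by (rule sum.reindex[unfolded comp_def])
  also have "\<dots> = (\<Sum>j\<in>nbrs E i. ((norm (p$j - p$i))^2 - (d {i,j})^2)^2)"
  proof (rule sum.cong[OF refl])
    fix j assume "j \<in> nbrs E i"
    then have "i \<noteq> j" using edges by (auto simp: nbrs_def)
    then show "edge_term d p {i,j} = ((norm (p$j - p$i))^2 - (d {i,j})^2)^2"
      by (rule edge_term_doubleton)
  qed
  finally have "(\<Sum>e\<in>E \<inter> {e. i \<in> e}. edge_term d p e) = 4 * psi_i d E i p"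
    by (simp add: psi_i_def nbrs_def)
  moreover have "(\<Sum>e\<in>E. edge_term d p e)
      = (\<Sum>e\<in>E \<inter> {e. i \<in> e}. edge_term d p e) + (\<Sum>e\<in>E - {e. i \<in> e}. edge_term d p e)"
    by (rule sum.Int_Diff) simp
  ultimately show ?thesis
    by (simp add: psi_def psi_rest_def)
qed

lemma psi_rest_differentiable:
  fixes E :: "'v::finite set set" and p :: "real^'n::finite^'v"
  assumes edges: "\<forall>e\<in>E. card e = 2"
  shows "psi_rest d E i differentiable (at p)"
proof -
  have "(\<lambda>q. edge_term d q e) differentiable (at p)" if "e \<in> E" for e
  proof -
    obtain a c where ac: "a \<noteq> c" "e = {a,c}"
      using edges \<open>e \<in> E\<close> unfolding card_2_iff by blast
    then have "(\<lambda>q. edge_term d q e) = (\<lambda>q::real^'n^'v. (edge_vec a c q \<bullet> edge_vec a c q - (d e)^2)^2)"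
      by (simp add: edge_term_doubleton fun_eq_iff edge_vec_def power2_norm_eq_inner)
    then show ?thesis
      by (simp only:) (rule differentiableI[OF has_derivative_power[OF has_derivative_diff[OF
            has_derivative_inner[OF has_derivative_edge_vec has_derivative_edge_vec] has_derivative_const]]])
  qed
  then show ?thesis
    unfolding psi_rest_def[abs_def] by (intro differentiable_mult differentiable_const differentiable_sum) auto
qed

lemma psi_rest_translate_vertex:
  fixes E :: "'v::finite set set"
  assumes edges: "\<forall>e\<in>E. card e = 2"
  shows "psi_rest d E i (p + t *\<^sub>R Bfield b i k) = psi_rest d E i p"
  unfolding psi_rest_def
proof (intro arg_cong[where f="\<lambda>x. 1/4 * x"] sum.cong[OF refl])
  fix e assume e: "e \<in> E - {e. i \<in> e}"
  then obtain a c where "a \<noteq> c" "e = {a,c}"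
    using edges unfolding card_2_iff by blast
  moreover have "a \<noteq> i" "c \<noteq> i" using e \<open>e = {a,c}\<close> by auto
  ultimately show "edge_term d (p + t *\<^sub>R Bfield b i k) e = edge_term d p e"
    by (simp add: edge_term_doubleton Bfield_def)
qed

lemma psi_i'_Bfield:
  assumes "i \<notin> nbrs E i"
  shows "psi_i' d E i p (Bfield b i k) = psi_i_along d E i (b i k) p"
proof -
  have "edge_vec i j (Bfield b i k) = - b i k" if "j \<in> nbrs E i" for j
    using that assms by (auto simp: edge_vec_def Bfield_def)
  then show ?thesis
    by (simp add: psi_i'_def psi_i_along_def sum_negf[symmetric])
qed

lemma lie_Xfield_psi:
  fixes E :: "'v::finite set set" and b :: "'v \<Rightarrow> 'n::finite \<Rightarrow> real^'n"
  assumes edges: "\<forall>e\<in>E. card e = 2"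
  shows "lie (Xfield h d E b i k \<nu>) (psi d E) = (\<lambda>p. h \<nu> (psi_i d E i p) * psi_i_along d E i (b i k) p)"
proof
  fix p :: "real^'n^'v"
  define D where "D = frechet_derivative (psi_rest d E i) (at p)"
  have D: "(psi_rest d E i has_derivative D) (at p)"
    unfolding D_def using psi_rest_differentiable[OF edges] frechet_derivative_works by blast
  have "psi d E = (\<lambda>q::real^'n^'v. psi_i d E i q + psi_rest d E i q)"
    using psi_eq_psi_i_plus_psi_rest[OF edges] by blast
  then have "frechet_derivative (psi d E) (at p) = (\<lambda>v. psi_i' d E i p v + D v)"
    by (simp only:) (rule frechet_derivative_at[OF has_derivative_add[OF has_derivative_psi_i D], symmetric])
  moreover have "D (Bfield b i k) = 0"
    using has_derivative_zero_along_invariant_direction[OF D] psi_rest_translate_vertex[OF edges] .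
  moreover have "i \<notin> nbrs E i"
    using edges by (auto simp: nbrs_def)
  moreover note linear_cmul[OF has_derivative_linear[OF D]]
    linear_cmul[OF has_derivative_linear[OF has_derivative_psi_i[of d E i p]]]
  ultimately show "lie (Xfield h d E b i k \<nu>) (psi d E) p = h \<nu> (psi_i d E i p) * psi_i_along d E i (b i k) p"
    by (simp add: lie_def Xfield_def psi_i'_Bfield)
qed

lemma cutoff_product_psi_i:
  fixes E :: "'v::finite set set" and u :: "real^'n::finite" and h h' h'' :: "real \<Rightarrow> real"
  assumes r_pos: "r > 0" and u_le_1: "norm u \<le> 1"
    and h_nonpos: "\<And>y. y \<le> 0 \<Longrightarrow> h y = 0"
    and h_deriv: "\<And>y. y > 0 \<Longrightarrow> (h has_real_derivative h' y) (at y)"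
    and h'_deriv: "\<And>y. y > 0 \<Longrightarrow> (h' has_real_derivative h'' y) (at y)"
    and h''_cont: "continuous_on {0<..} h''"
    and c_pos: "c > 0" and c_ge: "sublevel_const d E i r \<le> c"
    and h_bounds: "\<And>y. 0 < y \<Longrightarrow> y \<le> r \<Longrightarrow> \<bar>h y\<bar> \<le> c * y \<and> \<bar>h' y\<bar> \<le> c \<and> \<bar>h'' y * y\<bar> \<le> c"
  shows "cutoff_product (psi_i d E i) (psi_i' d E i) (psi_i'' d E i)
    (psi_i_along d E i u) (psi_i_along' d E i u) (psi_i_along'' d E i u) h h' h'' r c"
  using assms by unfold_locales (auto simp: has_derivative_psi_i has_derivative_psi_i'
      has_derivative_psi_i_along has_derivative_psi_i_along' continuous_on_psi_i''
      continuous_on_psi_i_along'' bilinear_psi_i'' bilinear_psi_i_along'' psi_i_nonneg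
      psi_i'_bound psi_i''_bound psi_i_along_bound psi_i_along'_bound psi_i_along''_bound)

theorem lemma5p1:
  fixes E :: "'v::finite set set"
    and d :: "'v set \<Rightarrow> real"
    and b :: "'v \<Rightarrow> 'n::finite \<Rightarrow> real^'n"
    and h :: "nat \<Rightarrow> real \<Rightarrow> real"
    and i :: 'v and k :: 'n and \<nu> :: nat and r :: real
  assumes E_ne: "E \<noteq> {}"
    and E_edges: "\<forall>e\<in>E. card e = 2"
    and d_nonneg: "\<forall>e\<in>E. d e \<ge> 0"
    and b_orthonormal: "\<forall>i k l. b i k \<bullet> b i l = (if k = l then 1 else 0)"
    and h_i: "\<forall>\<mu>\<in>{1,2}. \<forall>y\<le>0. h \<mu> y = 0"
    and h_ii_bdd: "\<forall>\<mu>\<in>{1,2}. \<exists>M. \<forall>y>0. \<bar>h \<mu> y\<bar> \<le> M"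
    and h_ii_C2: "\<forall>\<mu>\<in>{1,2}. C2_on {0<..} (h \<mu>)"
    and h_iii: "\<forall>\<mu>\<in>{1,2}. \<exists>c \<delta>. \<delta> > 0 \<and> (\<forall>y. 0 < y \<and> y < \<delta> \<longrightarrow> \<bar>h \<mu> y / y\<bar> \<le> c)"
    and h_iv: "\<forall>\<mu>\<in>{1,2}. \<exists>c \<delta>. \<delta> > 0 \<and> (\<forall>y. 0 < y \<and> y < \<delta> \<longrightarrow> \<bar>deriv (h \<mu>) y\<bar> \<le> c)"
    and h_v: "\<forall>\<mu>\<in>{1,2}. \<exists>c \<delta>. \<delta> > 0 \<and> (\<forall>y. 0 < y \<and> y < \<delta> \<longrightarrow> \<bar>deriv (deriv (h \<mu>)) y * y\<bar> \<le> c)"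
    and h_vi: "\<exists>r' c'. r' > 0 \<and> c' > 0 \<and> (\<forall>y. 0 < y \<and> y \<le> r' \<longrightarrow>
                 deriv (h 2) y * h 1 y - deriv (h 1) y * h 2 y \<le> - c' * y)"
    and nu: "\<nu> \<in> {1,2}"
    and r_pos: "r > 0"
  shows
    "C1_on UNIV (\<lambda>p::real^'n^'v. h \<nu> (psi_i d E i p))
     \<and> (\<exists>c>0. \<forall>p::real^'n^'v. psi_i d E i p \<le> r \<longrightarrow> \<bar>h \<nu> (psi_i d E i p)\<bar> \<le> c * psi_i d E i p)
     \<and> (\<exists>c>0. \<forall>(p::real^'n^'v) v. psi_i d E i p \<le> r \<longrightarrow>
           \<bar>frechet_derivative (\<lambda>q. h \<nu> (psi_i d E i q)) (at p) v\<bar> \<le> c * sqrt (psi_i d E i p) * norm v)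
     \<and> C2_on UNIV (lie (Xfield h d E b i k \<nu>) (psi d E))
     \<and> (\<exists>c>0. \<forall>p. psi_i d E i p \<le> r \<longrightarrow>
           \<bar>lie (Xfield h d E b i k \<nu>) (psi d E) p\<bar> \<le> c * psi_i d E i p powr (3/2))
     \<and> (\<exists>c>0. \<forall>p v. psi_i d E i p \<le> r \<longrightarrow>
           \<bar>frechet_derivative (lie (Xfield h d E b i k \<nu>) (psi d E)) (at p) v\<bar> \<le> c * psi_i d E i p * norm v)
     \<and> (\<exists>c>0. \<forall>p v w. psi_i d E i p \<le> r \<longrightarrow>
           \<bar>D2 (lie (Xfield h d E b i k \<nu>) (psi d E)) p v w\<bar> \<le> c * sqrt (psi_i d E i p) * norm v * norm w)"
proof -
  obtain h' h'' c0 where h_deriv: "\<And>y. 0 < y \<Longrightarrow> (h \<nu> has_real_derivative h' y) (at y)"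
    and h'_deriv: "\<And>y. 0 < y \<Longrightarrow> (h' has_real_derivative h'' y) (at y)"
    and h''_cont: "continuous_on {0<..} h''" and c0: "c0 > 0"
    and h_bounds: "\<And>y. 0 < y \<Longrightarrow> y \<le> r \<Longrightarrow> \<bar>h \<nu> y\<bar> \<le> c0 * y \<and> \<bar>h' y\<bar> \<le> c0 \<and> \<bar>h'' y * y\<bar> \<le> c0"
    using cutoff_derivative_bounds[where r=r, OF h_ii_C2[rule_format, OF nu] h_iii[rule_format, OF nu]
        h_iv[rule_format, OF nu] h_v[rule_format, OF nu]]
    by blast
  define c where "c = max c0 (sublevel_const d E i r)"
  have c0_le: "c0 \<le> c" by (simp add: c_def)
  have "\<bar>h \<nu> y\<bar> \<le> c * y \<and> \<bar>h' y\<bar> \<le> c \<and> \<bar>h'' y * y\<bar> \<le> c" if "0 < y" "y \<le> r" for y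
    using h_bounds[OF that] mult_right_mono[OF c0_le less_imp_le[OF that(1)]] c0_le by auto
  moreover have "norm (b i k) \<le> 1"
    using b_orthonormal by (simp add: norm_eq_sqrt_inner)
  ultimately interpret cutoff_product "psi_i d E i" "psi_i' d E i" "psi_i'' d E i"
      "psi_i_along d E i (b i k)" "psi_i_along' d E i (b i k)" "psi_i_along'' d E i (b i k)"
      "h \<nu>" h' h'' r c
    using r_pos h_i nu h_deriv h'_deriv h''_cont c0
    by (intro cutoff_product_psi_i) (auto simp: c_def)
  show ?thesis
    unfolding lie_Xfield_psi[OF E_edges] by (rule cutoff_product_bounds)
qed

end
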